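(* Let $G=(V,E)$ be a connected finite multigraph without loops with $|V|\ge 2$, and let $f$ be an admissible function. Then there exists a cut $[S,\bar S]$ of $G$ such that $d^f_G(S,\bar S)=d^f(G)$ and such that both induced subgraphs $G[S]$ and $G[\bar S]$ are connected.
   Context: An admissible function is a function $f:[0,1]\to[0,\infty)$ that is concave and increasing on $[0,\tfrac12]$ and satisfies $f(x)=f(1-x)$ for all $x\in[0,1]$. For a graph $G=(V,E)$ and a nonempty proper subset $S\subset V$ with complement $\bar S=V\setminus S$, the cut $[S,\bar S]$ is the set of edges with one endpoint in $S$ and the other in $\bar S$; its balance is $b(S,\bar S)=\min(|S|,|\bar S|)/|V|$. Define $d^f_G(S,\bar S)=|[S,\bar S]|/f(b(S,\bar S))$ (interpreted as $+\infty$ if the denominator is $0$), and $d^f(G)=\min d^f_G(S,\bar S)$ over all cuts of $G$. $G[A]$ denotes the subgraph induced on $A\subseteq V$. *)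

theory Defs
  imports "HOL-Analysis.Analysis" "HOL-Library.Extended_Real"
begin

text \<open>A finite loopless multigraph on vertex set V, given by an edge-multiplicity
function mu: mu u v is the number of edges between u and v.\<close>
definition multigraph :: "'a set \<Rightarrow> ('a \<Rightarrow> 'a \<Rightarrow> nat) \<Rightarrow> bool" where
  "multigraph V mu \<longleftrightarrow> finite V \<and> (\<forall>u v. mu u v = mu v u)
     \<and> (\<forall>v. mu v v = 0) \<and> (\<forall>u v. mu u v > 0 \<longrightarrow> u \<in> V \<and> v \<in> V)"

definition induced_connected :: "('a \<Rightarrow> 'a \<Rightarrow> nat) \<Rightarrow> 'a set \<Rightarrow> bool" where
  "induced_connected mu A \<longleftrightarrow>
     (\<forall>u\<in>A. \<forall>v\<in>A. (u, v) \<in> ({(x, y). x \<in> A \<and> y \<in> A \<and> mu x y > 0})\<^sup>*)"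

definition admissible :: "(real \<Rightarrow> real) \<Rightarrow> bool" where
  "admissible f \<longleftrightarrow> (\<forall>x\<in>{0..1}. f x \<ge> 0)
     \<and> concave_on {0..1/2} f \<and> mono_on {0..1/2} f
     \<and> (\<forall>x\<in>{0..1}. f x = f (1 - x))"

definition cut_size :: "'a set \<Rightarrow> ('a \<Rightarrow> 'a \<Rightarrow> nat) \<Rightarrow> 'a set \<Rightarrow> nat" where
  "cut_size V mu S = (\<Sum>u\<in>S. \<Sum>v\<in>V - S. mu u v)"

definition balance :: "'a set \<Rightarrow> 'a set \<Rightarrow> real" where
  "balance V S = real (min (card S) (card (V - S))) / real (card V)"

definition is_cut :: "'a set \<Rightarrow> 'a set \<Rightarrow> bool" where
  "is_cut V S \<longleftrightarrow> S \<subseteq> V \<and> S \<noteq> {} \<and> S \<noteq> V"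

definition dcut :: "(real \<Rightarrow> real) \<Rightarrow> 'a set \<Rightarrow> ('a \<Rightarrow> 'a \<Rightarrow> nat) \<Rightarrow> 'a set \<Rightarrow> ereal" where
  "dcut f V mu S = (if f (balance V S) = 0 then \<infinity>
      else ereal (real (cut_size V mu S) / f (balance V S)))"

definition dgraph :: "(real \<Rightarrow> real) \<Rightarrow> 'a set \<Rightarrow> ('a \<Rightarrow> 'a \<Rightarrow> nat) \<Rightarrow> ereal" where
  "dgraph f V mu = Min (dcut f V mu ` {S. is_cut V S})"

end

theory Submission imports Defs begin

text \<open>
  Two facts drive the argument.
  (1) An admissible f is subadditive on (0,1]: since f is concave with f 0 \<ge> 0 on [0,1/2]
      and symmetric about 1/2, the ratio f x / x is non-increasing on (0,1].
  (2) Hence if a cut side S splits into two nonempty parts A, B with no edges between them,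
      then cut_size S = cut_size A + cut_size B while f(bal S) \<le> f(bal A) + f(bal B), so by
      the mediant inequality A or B is a cut at least as good as S.
  Iterating (2) (induction on card S), every cut side S contains a connected piece C that
  is a union of components of G[S] and satisfies dcut C \<le> dcut S.
  For the theorem, take an optimal cut S0 and such a piece C \<subseteq> S0; C is again optimal.
  Applying the same to the complementary side V - C gives an optimal connected D \<subseteq> V - C
  with no edges to (V - C) - D.  Finally V - D is connected, because every vertex of V - D
  reaches C inside V - D (a walk in G towards C cannot enter D without leaving V - C first),
  and C is connected.
\<close>

section \<open>Admissible functions\<close>

lemma admissible_nonneg: "admissible f \<Longrightarrow> x \<in> {0..1} \<Longrightarrow> f x \<ge> 0"
  unfolding admissible_def by blast

lemma admissible_symmetric: "admissible f \<Longrightarrow> x \<in> {0..1} \<Longrightarrow> f x = f (1 - x)"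
  unfolding admissible_def by blast

text \<open>On [0,1/2], concavity together with f 0 \<ge> 0 makes f x / x non-increasing.\<close>
lemma admissible_ratio_half:
  assumes adm: "admissible f" and x: "0 < x" "x \<le> y" "y \<le> 1/2"
  shows "x * f y \<le> y * f x"
proof -
  have conc: "concave_on {0..1/2} f" using adm unfolding admissible_def by blast
  define t where "t = x / y"
  have y0: "y > 0" using x by linarith
  have t: "0 \<le> t" "t \<le> 1" using x y0 by (auto simp: t_def divide_simps)
  have comb: "(1 - t) *\<^sub>R (0::real) + t *\<^sub>R y = x" using y0 by (simp add: t_def)
  have ends: "(0::real) \<in> {0..1/2}" "y \<in> {0..1/2}" using x by auto
  have "(1 - t) * f 0 + t * f y \<le> f x" using concave_onD[OF conc t ends] unfolding comb .
  moreover have "(1 - t) * f 0 \<ge> 0" using admissible_nonneg[OF adm, of 0] t by simp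
  ultimately have "t * f y \<le> f x" by linarith
  hence "y * (t * f y) \<le> y * f x" using y0 by (simp add: mult_left_mono)
  moreover have "y * (t * f y) = x * f y" using y0 by (simp add: t_def)
  ultimately show ?thesis by simp
qed

text \<open>By symmetry and monotonicity the ratio bound extends to all of (0,1].\<close>
lemma admissible_ratio:
  assumes adm: "admissible f" and x: "0 < x" "x \<le> y" "y \<le> 1"
  shows "x * f y \<le> y * f x"
proof (cases "y \<le> 1/2")
  case True thus ?thesis using admissible_ratio_half[OF adm x(1,2)] by auto
next
  case y_big: False
  have mono: "mono_on {0..1/2} f" using adm unfolding admissible_def by blast
  have fy: "f y = f (1 - y)" using admissible_symmetric[OF adm, of y] x by auto
  show ?thesis
  proof (cases "x \<le> 1/2")
    case True
    have "f (1 - y) \<le> f (1/2)" using y_big x by (intro mono_onD[OF mono]) auto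
    hence "x * f y \<le> x * f (1/2)" using fy x by (intro mult_left_mono) auto
    also have "\<dots> \<le> (1/2) * f x" using admissible_ratio_half[OF adm x(1), of "1/2"] True by auto
    also have "\<dots> \<le> y * f x"
      using admissible_nonneg[OF adm, of x] x True y_big by (intro mult_right_mono) auto
    finally show ?thesis .
  next
    case False
    have fx: "f x = f (1 - x)" using admissible_symmetric[OF adm, of x] x False by auto
    have "f (1 - y) \<le> f (1 - x)" using x False by (intro mono_onD[OF mono]) auto
    hence "x * f y \<le> x * f x" using fy fx x by (intro mult_left_mono) auto
    also have "\<dots> \<le> y * f x" using admissible_nonneg[OF adm, of x] x by (intro mult_right_mono) auto
    finally show ?thesis .
  qed
qed

lemma admissible_subadditive:
  assumes adm: "admissible f" and ab: "0 < a" "0 < b" "a + b \<le> 1"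
  shows "f (a + b) \<le> f a + f b"
proof -
  have "a * f (a + b) \<le> (a + b) * f a" using admissible_ratio[OF adm ab(1), of "a + b"] ab by auto
  moreover have "b * f (a + b) \<le> (a + b) * f b"
    using admissible_ratio[OF adm ab(2), of "a + b"] ab by auto
  ultimately have "(a + b) * f (a + b) \<le> (a + b) * (f a + f b)" by (simp add: algebra_simps)
  thus ?thesis using ab by simp
qed

section \<open>The mediant inequality for extended ratios\<close>

definition eratio :: "real \<Rightarrow> real \<Rightarrow> ereal" where
  "eratio c d = (if d = 0 then \<infinity> else ereal (c / d))"

lemma dcut_eratio: "dcut f V mu S = eratio (real (cut_size V mu S)) (f (balance V S))"
  by (simp add: dcut_def eratio_def)

lemma eratio_mediant:
  fixes cA cB dA dB d :: real
  assumes "cA \<ge> 0" "cB \<ge> 0" "dA \<ge> 0" "dB \<ge> 0" "d \<ge> 0" "d \<le> dA + dB"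
  shows "eratio cA dA \<le> eratio (cA + cB) d \<or> eratio cB dB \<le> eratio (cA + cB) d"
proof (cases "d = 0")
  case True thus ?thesis by (simp add: eratio_def)
next
  case False
  hence d: "d > 0" using assms by auto
  define r where "r = (cA + cB) / d"
  have r: "r * d = cA + cB" "r \<ge> 0" using d assms by (auto simp: r_def)
  have bound: "c \<ge> r * e \<and> (e > 0 \<longrightarrow> c > r * e)"
    if "\<not> eratio c e \<le> eratio (cA + cB) d" "c \<ge> 0" "e \<ge> 0" for c e
  proof (cases "e = 0")
    case True thus ?thesis using that by simp
  next
    case False
    hence "c / e > r" using that d by (auto simp: eratio_def r_def)
    thus ?thesis using False that by (auto simp: field_simps)
  qed
  show ?thesis
  proof (rule ccontr)
    assume "\<not> ?thesis"
    hence "cA \<ge> r * dA \<and> (dA > 0 \<longrightarrow> cA > r * dA)" "cB \<ge> r * dB \<and> (dB > 0 \<longrightarrow> cB > r * dB)"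
      using bound assms by auto
    moreover have "dA > 0 \<or> dB > 0" using assms d by auto
    ultimately have "cA + cB > r * (dA + dB)" by (auto simp: algebra_simps)
    moreover have "r * (dA + dB) \<ge> r * d" using r assms by (intro mult_left_mono) auto
    ultimately show False using r by simp
  qed
qed

section \<open>Multigraphs, cuts and induced connectivity\<close>

lemma multigraph_finite: "multigraph V mu \<Longrightarrow> finite V"
  and multigraph_sym: "multigraph V mu \<Longrightarrow> mu u v = mu v u"
  by (simp_all add: multigraph_def)

definition adj_in :: "('a \<Rightarrow> 'a \<Rightarrow> nat) \<Rightarrow> 'a set \<Rightarrow> ('a \<times> 'a) set" where
  "adj_in mu X = {(x, y). x \<in> X \<and> y \<in> X \<and> mu x y > 0}"

lemma induced_connected_adj_in:
  "induced_connected mu A \<longleftrightarrow> (\<forall>u\<in>A. \<forall>v\<in>A. (u, v) \<in> (adj_in mu A)\<^sup>*)"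
  by (simp add: induced_connected_def adj_in_def)

lemma adj_in_rtrancl_sym:
  assumes mg: "multigraph V mu" and "(x, y) \<in> (adj_in mu X)\<^sup>*"
  shows "(y, x) \<in> (adj_in mu X)\<^sup>*"
proof -
  have "sym (adj_in mu X)" using multigraph_sym[OF mg] by (auto simp: sym_def adj_in_def)
  thus ?thesis using assms(2) by (simp add: sym_rtrancl symD)
qed

lemma adj_in_rtrancl_mono: "X \<subseteq> Y \<Longrightarrow> (adj_in mu X)\<^sup>* \<subseteq> (adj_in mu Y)\<^sup>*"
  by (rule rtrancl_mono) (auto simp: adj_in_def)

lemma split_off_component:
  assumes mg: "multigraph V mu" and disc: "\<not> induced_connected mu S"
  obtains A B where "S = A \<union> B" "A \<inter> B = {}" "A \<noteq> {}" "B \<noteq> {}"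
    "induced_connected mu A" "\<forall>x\<in>A. \<forall>y\<in>B. mu x y = 0"
proof -
  obtain u v where uv: "u \<in> S" "v \<in> S" "(u, v) \<notin> (adj_in mu S)\<^sup>*"
    using disc by (auto simp: induced_connected_adj_in)
  define A where "A = {y \<in> S. (u, y) \<in> (adj_in mu S)\<^sup>*}"
  define B where "B = S - A"
  have no_edges: "\<forall>x\<in>A. \<forall>y\<in>B. mu x y = 0"
  proof (intro ballI)
    fix x y assume xy: "x \<in> A" "y \<in> B"
    show "mu x y = 0"
    proof (rule ccontr)
      assume "mu x y \<noteq> 0"
      hence "(x, y) \<in> adj_in mu S" using xy by (auto simp: adj_in_def A_def B_def)
      hence "(u, y) \<in> (adj_in mu S)\<^sup>*" using xy by (auto simp: A_def intro: rtrancl_into_rtrancl)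
      thus False using xy by (auto simp: A_def B_def)
    qed
  qed
  have walk_in_A: "(u, y) \<in> (adj_in mu A)\<^sup>*" if "(u, y) \<in> (adj_in mu S)\<^sup>*" for y
    using that
  proof (induction rule: rtrancl_induct)
    case base thus ?case by simp
  next
    case (step y z)
    hence "(y, z) \<in> adj_in mu A"
      by (auto simp: A_def adj_in_def intro: rtrancl_into_rtrancl)
    thus ?case using step by (meson rtrancl_into_rtrancl)
  qed
  have "induced_connected mu A"
    unfolding induced_connected_adj_in
  proof (intro ballI)
    fix y1 y2 assume "y1 \<in> A" "y2 \<in> A"
    hence "(u, y1) \<in> (adj_in mu A)\<^sup>*" "(u, y2) \<in> (adj_in mu A)\<^sup>*" using walk_in_A by (auto simp: A_def)
    thus "(y1, y2) \<in> (adj_in mu A)\<^sup>*" using adj_in_rtrancl_sym[OF mg] by (meson rtrancl_trans)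
  qed
  moreover have "u \<in> A" "v \<in> B" using uv by (auto simp: A_def B_def)
  moreover have "S = A \<union> B" "A \<inter> B = {}" by (auto simp: B_def A_def)
  ultimately show ?thesis using that no_edges by blast
qed

lemma cut_size_split:
  assumes mg: "multigraph V mu" and "S \<subseteq> V" "A \<inter> B = {}" "S = A \<union> B"
    and no_edges: "\<forall>x\<in>A. \<forall>y\<in>B. mu x y = 0"
  shows "cut_size V mu S = cut_size V mu A + cut_size V mu B"
proof -
  have fin: "finite V" "finite A" "finite B"
    using assms multigraph_finite[OF mg] by (auto intro: finite_subset)
  have no_edges_sym: "\<forall>y\<in>B. \<forall>x\<in>A. mu y x = 0"
  proof (intro ballI)
    fix y x assume "y \<in> B" "x \<in> A"
    thus "mu y x = 0" using no_edges multigraph_sym[OF mg, of y x] by simp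
  qed
  have outer: "(\<Sum>v\<in>V - X. mu u v) = (\<Sum>v\<in>V - S. mu u v)"
    if XY: "X \<union> Y = S" "X \<inter> Y = {}" "finite Y" "\<forall>y\<in>Y. mu u y = 0" for X Y u
  proof -
    have "V - X = (V - S) \<union> Y" "(V - S) \<inter> Y = {}" using XY assms(2) by auto
    hence "(\<Sum>v\<in>V - X. mu u v) = (\<Sum>v\<in>V - S. mu u v) + (\<Sum>v\<in>Y. mu u v)"
      using fin XY(3) by (simp add: sum.union_disjoint)
    thus ?thesis using XY(4) by simp
  qed
  have "cut_size V mu A = (\<Sum>u\<in>A. \<Sum>v\<in>V - S. mu u v)"
    unfolding cut_size_def using assms(3,4) fin(3) no_edges
    by (intro sum.cong[OF refl] outer[of A B]) auto
  moreover have "cut_size V mu B = (\<Sum>u\<in>B. \<Sum>v\<in>V - S. mu u v)"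
    unfolding cut_size_def using assms(3,4) fin(2) no_edges_sym
    by (intro sum.cong[OF refl] outer[of B A]) auto
  moreover have "cut_size V mu S = (\<Sum>u\<in>A. \<Sum>v\<in>V - S. mu u v) + (\<Sum>u\<in>B. \<Sum>v\<in>V - S. mu u v)"
    unfolding cut_size_def assms(4) using fin(2,3) assms(3) by (rule sum.union_disjoint)
  ultimately show ?thesis by simp
qed

lemma dcut_compl:
  assumes mg: "multigraph V mu" and "C \<subseteq> V"
  shows "dcut f V mu (V - C) = dcut f V mu C"
proof -
  have VV: "V - (V - C) = C" using assms by auto
  have "cut_size V mu (V - C) = cut_size V mu C"
    unfolding cut_size_def VV using multigraph_sym[OF mg] by (subst sum.swap) simp
  moreover have "balance V (V - C) = balance V C" unfolding balance_def VV by (simp add: min.commute)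
  ultimately show ?thesis by (simp add: dcut_def)
qed

text \<open>By symmetry of f, the balance can be replaced by the plain fraction |X| / |V|.\<close>
lemma f_balance:
  assumes "finite V" "X \<subseteq> V" "admissible f"
  shows "f (balance V X) = f (real (card X) / real (card V))"
proof (cases "V = {}")
  case True thus ?thesis using assms by (simp add: balance_def)
next
  case False
  hence V0: "card V > 0" using assms by auto
  have cX: "card X \<le> card V" "card (V - X) = card V - card X"
    using assms by (simp_all add: card_mono card_Diff_subset finite_subset)
  show ?thesis
  proof (cases "card X \<le> card V - card X")
    case True thus ?thesis by (simp add: balance_def cX)
  next
    case False
    have frac: "real (card X) / real (card V) \<in> {0..1}" using cX V0 by auto
    have "balance V X = 1 - real (card X) / real (card V)"
      using False cX V0 by (simp add: balance_def of_nat_diff field_simps)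
    thus ?thesis using admissible_symmetric[OF assms(3) frac] by simp
  qed
qed

section \<open>Splitting a disconnected cut side\<close>

text \<open>If a cut side splits into two parts without edges between them, one of the parts is
  a cut at least as good: cut sizes add, while f of the balances is subadditive.\<close>
lemma dcut_split_le:
  assumes mg: "multigraph V mu" and adm: "admissible f" and "S \<subseteq> V"
    and split: "S = A \<union> B" "A \<inter> B = {}" "A \<noteq> {}" "B \<noteq> {}"
    and no_edges: "\<forall>x\<in>A. \<forall>y\<in>B. mu x y = 0"
  shows "dcut f V mu A \<le> dcut f V mu S \<or> dcut f V mu B \<le> dcut f V mu S"
proof -
  have fin: "finite V" using mg by (rule multigraph_finite)
  have sub: "A \<subseteq> V" "B \<subseteq> V" using assms by auto
  have fin_AB: "finite A" "finite B" using sub fin by (auto intro: finite_subset)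
  have V0: "card V > 0" using assms fin by (auto simp: card_gt_0_iff)
  have card_S: "card S = card A + card B" using split fin_AB by (simp add: card_Un_disjoint)
  have "card S \<le> card V" using assms fin by (simp add: card_mono)
  have f_nonneg: "f (balance V X) \<ge> 0" if "X \<subseteq> V" for X
  proof -
    have "real (card X) / real (card V) \<in> {0..1}" using that fin V0 by (auto simp: card_mono)
    thus ?thesis using f_balance[OF fin that adm] admissible_nonneg[OF adm] by auto
  qed
  have "card A > 0" "card B > 0" using split fin_AB by (auto simp: card_gt_0_iff)
  hence "f (real (card A) / real (card V) + real (card B) / real (card V))
      \<le> f (real (card A) / real (card V)) + f (real (card B) / real (card V))"
    using V0 \<open>card S \<le> card V\<close> card_S by (intro admissible_subadditive[OF adm]) (auto simp: divide_simps)
  hence f_sub: "f (balance V S) \<le> f (balance V A) + f (balance V B)"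
    unfolding f_balance[OF fin \<open>S \<subseteq> V\<close> adm] f_balance[OF fin sub(1) adm] f_balance[OF fin sub(2) adm]
    by (simp add: card_S add_divide_distrib)
  have "cut_size V mu S = cut_size V mu A + cut_size V mu B"
    using cut_size_split[OF mg \<open>S \<subseteq> V\<close> split(2,1) no_edges] .
  hence "real (cut_size V mu S) = real (cut_size V mu A) + real (cut_size V mu B)" by simp
  moreover have "eratio (real (cut_size V mu A)) (f (balance V A))
        \<le> eratio (real (cut_size V mu A) + real (cut_size V mu B)) (f (balance V S))
      \<or> eratio (real (cut_size V mu B)) (f (balance V B))
        \<le> eratio (real (cut_size V mu A) + real (cut_size V mu B)) (f (balance V S))"
    using f_nonneg[OF sub(1)] f_nonneg[OF sub(2)] f_nonneg[OF \<open>S \<subseteq> V\<close>] f_sub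
    by (intro eratio_mediant) auto
  ultimately show ?thesis unfolding dcut_eratio by simp
qed

lemma connected_piece:
  assumes mg: "multigraph V mu" and adm: "admissible f" and "is_cut V S"
  shows "\<exists>C. C \<subseteq> S \<and> C \<noteq> {} \<and> induced_connected mu C
     \<and> (\<forall>x\<in>C. \<forall>y\<in>S - C. mu x y = 0) \<and> dcut f V mu C \<le> dcut f V mu S"
  using assms(3)
proof (induction "card S" arbitrary: S rule: less_induct)
  case less
  have S: "S \<subseteq> V" "S \<noteq> {}" using less.prems by (auto simp: is_cut_def)
  show ?case
  proof (cases "induced_connected mu S")
    case True thus ?thesis using S by auto
  next
    case False
    then obtain A B where AB: "S = A \<union> B" "A \<inter> B = {}" "A \<noteq> {}" "B \<noteq> {}"
      "induced_connected mu A" "\<forall>x\<in>A. \<forall>y\<in>B. mu x y = 0"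
      using split_off_component[OF mg] by metis
    consider "dcut f V mu A \<le> dcut f V mu S" | "dcut f V mu B \<le> dcut f V mu S"
      using dcut_split_le[OF mg adm S(1) AB(1-4,6)] by blast
    thus ?thesis
    proof cases
      case 1 thus ?thesis using AB by (intro exI[of _ A]) auto
    next
      case 2
      have "finite S" using S multigraph_finite[OF mg] by (auto intro: finite_subset)
      moreover have "B \<subset> S" using AB by auto
      ultimately have "card B < card S" by (rule psubset_card_mono)
      moreover have "is_cut V B" using less.prems AB by (auto simp: is_cut_def)
      ultimately obtain C where C: "C \<subseteq> B" "C \<noteq> {}" "induced_connected mu C"
        "\<forall>x\<in>C. \<forall>y\<in>B - C. mu x y = 0" "dcut f V mu C \<le> dcut f V mu B"
        using less.hyps by blast
      have "\<forall>x\<in>C. \<forall>y\<in>A. mu x y = 0" using C(1) AB(6) multigraph_sym[OF mg] by (metis subsetD)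
      moreover have "S - C \<subseteq> A \<union> (B - C)" using AB(1) by auto
      ultimately have "\<forall>x\<in>C. \<forall>y\<in>S - C. mu x y = 0" using C(4) by blast
      thus ?thesis using C 2 AB(1) by (intro exI[of _ C]) (auto intro: order_trans)
    qed
  qed
qed

section \<open>Optimal cuts\<close>

text \<open>There are finitely many cuts, so dgraph is a genuine minimum.\<close>
lemma finite_cuts: "finite V \<Longrightarrow> finite {S. is_cut V S}"
  by (rule finite_subset[of _ "Pow V"]) (auto simp: is_cut_def)

lemma dgraph_le: "finite V \<Longrightarrow> is_cut V X \<Longrightarrow> dgraph f V mu \<le> dcut f V mu X"
  unfolding dgraph_def by (intro Min_le finite_imageI finite_cuts) auto

lemma dgraph_attained:
  assumes "finite V" "card V \<ge> 2"
  shows "\<exists>S. is_cut V S \<and> dcut f V mu S = dgraph f V mu"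
proof -
  have "V \<noteq> {}" using assms(2) by auto
  then obtain a where "a \<in> V" by blast
  moreover have "V \<noteq> {a}" using assms(2) by auto
  ultimately have "is_cut V {a}" by (auto simp: is_cut_def)
  hence "dgraph f V mu \<in> dcut f V mu ` {S. is_cut V S}"
    unfolding dgraph_def using finite_cuts[OF assms(1)] by (intro Min_in) auto
  thus ?thesis by auto
qed

text \<open>If G is connected, C is a connected set, and D \<subseteq> V - C has no edges to the rest of
  V - C, then every vertex outside D reaches C inside V - D; hence V - D is connected.\<close>
lemma connected_after_removing_piece:
  assumes mg: "multigraph V mu" and conn: "induced_connected mu V"
    and C: "C \<subseteq> V" "C \<noteq> {}" "induced_connected mu C"
    and D: "D \<subseteq> V - C" "\<forall>x\<in>D. \<forall>y\<in>(V - C) - D. mu x y = 0"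
  shows "induced_connected mu (V - D)"
proof -
  obtain c0 where "c0 \<in> C" using C by auto
  have reach: "\<exists>c\<in>C. (y, c) \<in> (adj_in mu (V - D))\<^sup>*" if "y \<in> V - D" for y
  proof -
    have "(y, c0) \<in> (adj_in mu V)\<^sup>*" using conn that \<open>c0 \<in> C\<close> C by (auto simp: induced_connected_adj_in)
    thus ?thesis using that
    proof (induction rule: converse_rtrancl_induct)
      case base thus ?case using \<open>c0 \<in> C\<close> by blast
    next
      case (step y y')
      show ?case
      proof (cases "y \<in> C")
        case False
        have edge: "y \<in> V" "y' \<in> V" "mu y y' > 0" using step(1) by (auto simp: adj_in_def)
        have "y' \<notin> D"
        proof
          assume "y' \<in> D"
          hence "mu y' y = 0" using D(2) step(4) False edge by auto
          thus False using edge multigraph_sym[OF mg, of y y'] by simp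
        qed
        hence "y' \<in> V - D" "(y, y') \<in> adj_in mu (V - D)" using edge step(4) by (auto simp: adj_in_def)
        thus ?thesis using step(3) by (meson converse_rtrancl_into_rtrancl)
      qed blast
    qed
  qed
  show ?thesis
    unfolding induced_connected_adj_in
  proof (intro ballI)
    fix u v assume "u \<in> V - D" "v \<in> V - D"
    then obtain c1 c2 where c: "c1 \<in> C" "(u, c1) \<in> (adj_in mu (V - D))\<^sup>*"
      "c2 \<in> C" "(v, c2) \<in> (adj_in mu (V - D))\<^sup>*" using reach by blast
    have "C \<subseteq> V - D" using D(1) C(1) by auto
    hence "(c1, c2) \<in> (adj_in mu (V - D))\<^sup>*"
      using C(3) c adj_in_rtrancl_mono[of C "V - D" mu] by (auto simp: induced_connected_adj_in)
    thus "(u, v) \<in> (adj_in mu (V - D))\<^sup>*"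
      using c adj_in_rtrancl_sym[OF mg c(4)] by (meson rtrancl_trans)
  qed
qed

theorem proposition2:
  fixes V :: "'a set" and mu :: "'a \<Rightarrow> 'a \<Rightarrow> nat" and f :: "real \<Rightarrow> real"
  assumes "multigraph V mu"
    and "induced_connected mu V"
    and "card V \<ge> 2"
    and "admissible f"
  shows "\<exists>S. is_cut V S \<and> dcut f V mu S = dgraph f V mu
           \<and> induced_connected mu S \<and> induced_connected mu (V - S)"
proof -
  note mg = assms(1) and adm = assms(4)
  have fin: "finite V" using mg by (rule multigraph_finite)
  obtain S0 where S0: "is_cut V S0" "dcut f V mu S0 = dgraph f V mu"
    using dgraph_attained[OF fin assms(3)] by blast
  obtain C where C: "C \<subseteq> S0" "C \<noteq> {}" "induced_connected mu C" "dcut f V mu C \<le> dcut f V mu S0"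
    using connected_piece[OF mg adm S0(1)] by blast
  have "C \<subseteq> V" using C(1) S0(1) by (auto simp: is_cut_def)
  hence "is_cut V (V - C)" using C(1,2) S0(1) by (auto simp: is_cut_def)
  from connected_piece[OF mg adm this] obtain D where D: "D \<subseteq> V - C" "D \<noteq> {}"
      "induced_connected mu D" "\<forall>x\<in>D. \<forall>y\<in>(V - C) - D. mu x y = 0"
      "dcut f V mu D \<le> dcut f V mu (V - C)"
    by blast
  have cut_D: "is_cut V D" using D(1,2) C(2) \<open>C \<subseteq> V\<close> by (auto simp: is_cut_def)
  text \<open>D is optimal: its value is squeezed between dgraph and the value of C.\<close>
  have "dcut f V mu D \<le> dcut f V mu C" using D(5) dcut_compl[OF mg \<open>C \<subseteq> V\<close>] by simp
  hence "dcut f V mu D = dgraph f V mu"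
    using C(4) S0(2) dgraph_le[OF fin cut_D] by (metis antisym order_trans)
  moreover have "induced_connected mu (V - D)"
    using connected_after_removing_piece[OF mg assms(2) \<open>C \<subseteq> V\<close> C(2,3) D(1,4)] .
  ultimately show ?thesis using cut_D D(3) by blast
qed

end
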